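(* For any $m\ge2$, any $\beta_1,\dots,\beta_m\in\Delta_+$, any $F_{\beta_k}\in\mathfrak g_{-\beta_k}$ ($k=1,\dots,m$) and any $1\le\ell<m$, $$A_X(F_{\beta_1}\cdots F_{\beta_\ell}F_{\beta_{\ell+1}}\cdots F_{\beta_m})-A_X(F_{\beta_1}\cdots F_{\beta_{\ell+1}}F_{\beta_\ell}\cdots F_{\beta_m})=A_X(F_{\beta_1}\cdots[F_{\beta_\ell},F_{\beta_{\ell+1}}]\cdots F_{\beta_m}),$$ where on the right $[F_{\beta_\ell},F_{\beta_{\ell+1}}]\in\mathfrak g_{-(\beta_\ell+\beta_{\ell+1})}$ is treated as a single factor (the right side being $0$ if this commutator is $0$). Consequently $A_X$ extends to a well-defined linear map from $U(\mathfrak n_-)$ to $U(\mathfrak n_-)$-valued rational functions of $X_1,\dots,X_r$.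
   Context: $\mathfrak g$ is a simple complex Lie algebra with Cartan subalgebra $\mathfrak h$, roots $\Delta$, simple roots $\alpha_1,\dots,\alpha_r$, positive roots $\Delta_+$, $\mathfrak n_-=\bigoplus_{\alpha\in\Delta_+}\mathfrak g_{-\alpha}$. For $\beta\in\mathfrak h^*$ and $\lambda\in\mathfrak h$ put $X_\beta=e^{-2\pi i\beta(\lambda)}$, $X_j=X_{\alpha_j}$ (so $X_\beta$ is a monomial in $X_1,\dots,X_r$ for $\beta$ in the root lattice). For $\beta_1,\dots,\beta_m\in\Delta_+$ (the $\beta_k$ need not be distinct), $F_{\beta_k}\in\mathfrak g_{-\beta_k}$, and a permutation $\sigma\in S_m$, let $a_k^\sigma=\#\{j:\ k\le j\le m-1,\ \sigma(j)>\sigma(j+1)\}$ and $$A_X^\sigma(F_{\beta_1}\cdots F_{\beta_m})=\prod_{k=1}^m\frac{X_{\beta_{\sigma(k)}}^{a_k^\sigma+1}}{1-X_{\beta_{\sigma(1)}}\cdots X_{\beta_{\sigma(k)}}}\;F_{\beta_{\sigma(1)}}\cdots F_{\beta_{\sigma(m)}},$$ $A_X(F_{\beta_1}\cdots F_{\beta_m})=\sum_{\sigma\in S_m}A_X^\sigma(F_{\beta_1}\cdots F_{\beta_m})$ (a formula for each ordered tuple of root vectors, products taken in $U(\mathfrak n_-)$), and $A_X(1)=1$; $A_X$ is linear in each $F_{\beta_k}$. *)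

theory Defs
  imports Complex_Main "HOL-Combinatorics.Permutations"
begin

definition lie_algebra :: "(complex \<Rightarrow> 'g::ab_group_add \<Rightarrow> 'g) \<Rightarrow> ('g \<Rightarrow> 'g \<Rightarrow> 'g) \<Rightarrow> bool" where
  "lie_algebra sc br \<longleftrightarrow>
     vector_space sc \<and>
     (\<forall>x y z. br (x + y) z = br x z + br y z) \<and>
     (\<forall>x y z. br x (y + z) = br x y + br x z) \<and>
     (\<forall>c x y. br (sc c x) y = sc c (br x y)) \<and>
     (\<forall>c x y. br x (sc c y) = sc c (br x y)) \<and>
     (\<forall>x. br x x = 0) \<and>
     (\<forall>x y z. br x (br y z) + br y (br z x) + br z (br x y) = 0)"

definition fin_dim :: "(complex \<Rightarrow> 'g::ab_group_add \<Rightarrow> 'g) \<Rightarrow> bool" where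
  "fin_dim sc \<longleftrightarrow> (\<exists>B. finite B \<and> module.span sc B = UNIV)"

definition lie_ideal :: "(complex \<Rightarrow> 'g::ab_group_add \<Rightarrow> 'g) \<Rightarrow> ('g \<Rightarrow> 'g \<Rightarrow> 'g) \<Rightarrow> 'g set \<Rightarrow> bool" where
  "lie_ideal sc br I \<longleftrightarrow> module.subspace sc I \<and> (\<forall>x y. y \<in> I \<longrightarrow> br x y \<in> I)"

definition simple_lie_algebra :: "(complex \<Rightarrow> 'g::ab_group_add \<Rightarrow> 'g) \<Rightarrow> ('g \<Rightarrow> 'g \<Rightarrow> 'g) \<Rightarrow> bool" where
  "simple_lie_algebra sc br \<longleftrightarrow> lie_algebra sc br \<and> fin_dim sc \<and>
     (\<exists>x y. br x y \<noteq> 0) \<and> (\<forall>I. lie_ideal sc br I \<longrightarrow> I = {0} \<or> I = UNIV)"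

definition root_space :: "(complex \<Rightarrow> 'g::ab_group_add \<Rightarrow> 'g) \<Rightarrow> ('g \<Rightarrow> 'g \<Rightarrow> 'g) \<Rightarrow> 'g set \<Rightarrow> ('g \<Rightarrow> complex) \<Rightarrow> 'g set" where
  "root_space sc br h \<alpha> = {x. \<forall>t\<in>h. br t x = sc (\<alpha> t) x}"

text \<open>Cartan subalgebra of a semisimple Lie algebra = maximal toral subalgebra:
  an abelian subspace acting diagonalizably (g is spanned by weight spaces) and equal to its
  own centralizer (the zero weight space).\<close>
definition cartan_subalgebra :: "(complex \<Rightarrow> 'g::ab_group_add \<Rightarrow> 'g) \<Rightarrow> ('g \<Rightarrow> 'g \<Rightarrow> 'g) \<Rightarrow> 'g set \<Rightarrow> bool" where
  "cartan_subalgebra sc br h \<longleftrightarrow> module.subspace sc h \<and>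
     (\<forall>a\<in>h. \<forall>b\<in>h. br a b = 0) \<and>
     root_space sc br h (\<lambda>_. 0) = h \<and>
     module.span sc (\<Union>\<alpha>. root_space sc br h \<alpha>) = UNIV"

text \<open>Roots: functionals (only their values on h matter) nonzero on h with nonzero root space.\<close>
definition is_root :: "(complex \<Rightarrow> 'g::ab_group_add \<Rightarrow> 'g) \<Rightarrow> ('g \<Rightarrow> 'g \<Rightarrow> 'g) \<Rightarrow> 'g set \<Rightarrow> ('g \<Rightarrow> complex) \<Rightarrow> bool" where
  "is_root sc br h \<alpha> \<longleftrightarrow> (\<exists>t\<in>h. \<alpha> t \<noteq> 0) \<and> root_space sc br h \<alpha> \<noteq> {0}"

definition simple_roots :: "(complex \<Rightarrow> 'g::ab_group_add \<Rightarrow> 'g) \<Rightarrow> ('g \<Rightarrow> 'g \<Rightarrow> 'g) \<Rightarrow> 'g set \<Rightarrow> (nat \<Rightarrow> 'g \<Rightarrow> complex) \<Rightarrow> nat \<Rightarrow> bool" where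
  "simple_roots sc br h al r \<longleftrightarrow>
     (\<forall>j<r. is_root sc br h (al j)) \<and>
     (\<forall>c::nat \<Rightarrow> complex. (\<forall>t\<in>h. (\<Sum>j<r. c j * al j t) = 0) \<longrightarrow> (\<forall>j<r. c j = 0)) \<and>
     (\<forall>\<alpha>. is_root sc br h \<alpha> \<longrightarrow>
        (\<exists>c::nat \<Rightarrow> int. (\<forall>t\<in>h. \<alpha> t = (\<Sum>j<r. of_int (c j) * al j t)) \<and>
                         ((\<forall>j<r. c j \<ge> 0) \<or> (\<forall>j<r. c j \<le> 0))))"

definition pos_root :: "(complex \<Rightarrow> 'g::ab_group_add \<Rightarrow> 'g) \<Rightarrow> ('g \<Rightarrow> 'g \<Rightarrow> 'g) \<Rightarrow> 'g set \<Rightarrow> (nat \<Rightarrow> 'g \<Rightarrow> complex) \<Rightarrow> nat \<Rightarrow> ('g \<Rightarrow> complex) \<Rightarrow> bool" where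
  "pos_root sc br h al r \<beta> \<longleftrightarrow> is_root sc br h \<beta> \<and>
     (\<exists>c::nat \<Rightarrow> nat. \<forall>t\<in>h. \<beta> t = (\<Sum>j<r. of_nat (c j) * al j t))"

definition n_minus :: "(complex \<Rightarrow> 'g::ab_group_add \<Rightarrow> 'g) \<Rightarrow> ('g \<Rightarrow> 'g \<Rightarrow> 'g) \<Rightarrow> 'g set \<Rightarrow> (nat \<Rightarrow> 'g \<Rightarrow> complex) \<Rightarrow> nat \<Rightarrow> 'g set" where
  "n_minus sc br h al r = module.span sc
     (\<Union>{root_space sc br h (\<lambda>t. - \<beta> t) | \<beta>. pos_root sc br h al r \<beta>})"

section \<open>Associative algebras receiving n_- (stand-in for U(n_-))\<close>

definition complex_assoc_algebra :: "(complex \<Rightarrow> 'u::ring_1 \<Rightarrow> 'u) \<Rightarrow> bool" where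
  "complex_assoc_algebra su \<longleftrightarrow> vector_space su \<and>
     (\<forall>c a b. su c (a * b) = su c a * b \<and> su c (a * b) = a * su c b)"

definition lie_hom_into :: "(complex \<Rightarrow> 'g::ab_group_add \<Rightarrow> 'g) \<Rightarrow> ('g \<Rightarrow> 'g \<Rightarrow> 'g) \<Rightarrow> 'g set \<Rightarrow>
     (complex \<Rightarrow> 'u::ring_1 \<Rightarrow> 'u) \<Rightarrow> ('g \<Rightarrow> 'u) \<Rightarrow> bool" where
  "lie_hom_into sc br n su \<iota> \<longleftrightarrow>
     (\<forall>x\<in>n. \<forall>y\<in>n. \<iota> (x + y) = \<iota> x + \<iota> y \<and> \<iota> (br x y) = \<iota> x * \<iota> y - \<iota> y * \<iota> x) \<and>
     (\<forall>c. \<forall>x\<in>n. \<iota> (sc c x) = su c (\<iota> x))"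

definition Xw :: "('g \<Rightarrow> complex) \<Rightarrow> 'g \<Rightarrow> complex" where
  "Xw \<beta> lam = exp (- 2 * pi * \<i> * \<beta> lam)"

text \<open>0-indexed: a_k = #{j. k <= j <= m-2, sigma j > sigma (j+1)}.\<close>
definition descents_from :: "nat \<Rightarrow> (nat \<Rightarrow> nat) \<Rightarrow> nat \<Rightarrow> nat" where
  "descents_from m \<sigma> k = card {j. k \<le> j \<and> Suc j < m \<and> \<sigma> j > \<sigma> (Suc j)}"

text \<open>A_X^sigma applied to the word given by the list ws of (weight, root vector) pairs.\<close>
definition AX_sigma :: "(complex \<Rightarrow> 'u::ring_1 \<Rightarrow> 'u) \<Rightarrow> ('g \<Rightarrow> 'u) \<Rightarrow> 'g \<Rightarrow>
     (('g \<Rightarrow> complex) \<times> 'g) list \<Rightarrow> (nat \<Rightarrow> nat) \<Rightarrow> 'u" where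
  "AX_sigma su \<iota> lam ws \<sigma> =
     (let m = length ws; X = (\<lambda>k. Xw (fst (ws ! k)) lam) in
      su (\<Prod>k<m. X (\<sigma> k) ^ (descents_from m \<sigma> k + 1) / (1 - (\<Prod>i\<le>k. X (\<sigma> i))))
         (prod_list (map (\<lambda>k. \<iota> (snd (ws ! \<sigma> k))) [0..<m])))"

definition AX :: "(complex \<Rightarrow> 'u::ring_1 \<Rightarrow> 'u) \<Rightarrow> ('g \<Rightarrow> 'u) \<Rightarrow> 'g \<Rightarrow>
     (('g \<Rightarrow> complex) \<times> 'g) list \<Rightarrow> 'u" where
  "AX su \<iota> lam ws = (\<Sum>\<sigma>\<in>{\<sigma>. \<sigma> permutes {..<length ws}}. AX_sigma su \<iota> lam ws \<sigma>)"

end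

theory Submission
  imports Defs
begin

(* Encode the word F_{beta_0} ... F_{beta_(m-1)} by its letters 0, ..., m-1 with weights
   x k = X_{beta_k} and images y k = iota (F_k).  A permutation sigma corresponds to the
   arrangement s = [sigma 0, ..., sigma (m-1)], and the scalar of A_X^sigma only depends on the
   weights of s and on its descents; it is computed letter by letter by the function wcoeff.
   Thus A_X is a sum over arrangements (AX_as_arrangement_sum).  Exchanging F_l and F_(l+1)
   amounts to comparing the letters through the transposition (l l+1) (AX_transposed_word);
   contracting them to the commutator amounts to an arrangement sum over the alphabet without
   l+1 (AX_contracted_word).

   The heart of the proof is arrangement_sum_swap: arrangements in which l and l+1 are not
   adjacent contribute equally to both sums, while those containing the block "l, l+1" or
   "l+1, l" correspond to arrangements of the smaller alphabet, and a telescoping identity for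
   the coefficients (wcoeff_swap_adjacent) turns their contributions into the coefficient of the
   contracted word times the commutator. *)

abbreviation tr :: "nat \<Rightarrow> nat \<Rightarrow> nat" where
  "tr l \<equiv> Transposition.transpose l (Suc l)"

(* The coefficient of a word.  wcoeff rho x P s reads the letters of s from left to right;
  P is the product of the X's of the letters already read.  For rho = id and P = 1 this is the scalar of A_X^sigma. *)
fun wcoeff :: "(nat \<Rightarrow> nat) \<Rightarrow> (nat \<Rightarrow> 'a::field) \<Rightarrow> 'a \<Rightarrow> nat list \<Rightarrow> 'a" where
  "wcoeff \<rho> x P [] = 1"
| "wcoeff \<rho> x P (c # s) =
     x c * (if s \<noteq> [] \<and> \<rho> (hd s) < \<rho> c then P * x c else 1) / (1 - P * x c) * wcoeff \<rho> x (P * x c) s"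

lemma wcoeff_cong:
  assumes "\<forall>c\<in>set s. \<forall>d\<in>set s. (\<rho>1 d < \<rho>1 c) = (\<rho>2 d < \<rho>2 c)"
    and "\<forall>c\<in>set s. x1 c = x2 c"
  shows "wcoeff \<rho>1 x1 P s = wcoeff \<rho>2 x2 P s"
  using assms by (induction s arbitrary: P) auto

lemma wcoeff_map: "wcoeff \<rho> x P (map f s) = wcoeff (\<rho> \<circ> f) (x \<circ> f) P s"
  by (induction s arbitrary: P) (auto simp: hd_map)

(* If l and l+1 are not adjacent in s, comparing letters through (l l+1) sees exactly the
  same descents, so the coefficient does not change. *)
lemma wcoeff_swap_nonadjacent:
  assumes "\<not> (\<exists>u v. s = u @ l # Suc l # v)" "\<not> (\<exists>u v. s = u @ Suc l # l # v)"
  shows "wcoeff id x P s = wcoeff (tr l) x P s"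
  using assms
proof (induction s arbitrary: P)
  case Nil
  then show ?case by simp
next
  case (Cons c s)
  have IH: "wcoeff id x Q s = wcoeff (tr l) x Q s" for Q
    using Cons.prems by (intro Cons.IH) (metis append_Cons)+
  have "tr l (hd s) < tr l c \<longleftrightarrow> hd s < c" if "s \<noteq> []"
  proof -
    have "\<not> (c = l \<and> hd s = Suc l)" "\<not> (c = Suc l \<and> hd s = l)"
      using Cons.prems \<open>s \<noteq> []\<close> by (metis append_Nil list.collapse)+
    then show ?thesis by (auto simp: transpose_def)
  qed
  then have "(s \<noteq> [] \<and> id (hd s) < id c) = (s \<noteq> [] \<and> tr l (hd s) < tr l c)"
    by auto
  then show ?case by (simp only: wcoeff.simps IH)
qed

(* The letters in front of the block multiply both sides by the same factor. *)
lemma wcoeff_swap_adjacent: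
  assumes "l \<notin> set u" "Suc l \<notin> set u" "l \<notin> set v" "Suc l \<notin> set v"
    and "1 - P * prod_list (map x u) * x l \<noteq> 0"
  shows "wcoeff id x P (u @ l # Suc l # v) - wcoeff (tr l) x P (u @ l # Suc l # v)
       = wcoeff id (x(l := x l * x (Suc l))) P (u @ l # v)"
  using assms
proof (induction u arbitrary: P)
  case Nil
  define a where "a = x l"
  define W where "W = wcoeff id x (P * a) (Suc l # v)"
  have hd_v: "hd v < l \<longleftrightarrow> hd v < Suc l" "tr l (hd v) < l \<longleftrightarrow> hd v < Suc l" if "v \<noteq> []"
    using Nil.prems that by (cases v; auto simp: transpose_def)+
  have tr_tail: "wcoeff (tr l) x (P * a) (Suc l # v) = W"
    unfolding W_def by (rule wcoeff_cong) (use Nil.prems in \<open>auto simp: transpose_def\<close>)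
  have merged_tail: "wcoeff id (x(l := x l * x (Suc l))) Q v = wcoeff id x Q v" for Q
    by (rule wcoeff_cong) (use Nil.prems in auto)
  have id_word: "wcoeff id x P (l # Suc l # v) = a / (1 - P * a) * W"
    by (simp add: W_def a_def)
  have tr_word: "wcoeff (tr l) x P (l # Suc l # v) = a * (P * a) / (1 - P * a) * W"
    using tr_tail by (simp add: a_def)
  have merged_word: "wcoeff id (x(l := x l * x (Suc l))) P (l # v) = a * W"
    by (simp add: W_def merged_tail hd_v a_def mult.assoc)
  have "a / d * W - a * (P * a) / d * W = a * W * (1 - P * a) / d" for d
    by (simp add: algebra_simps diff_divide_distrib)
  also have "a * W * (1 - P * a) / (1 - P * a) = a * W"
    using Nil.prems by (simp add: a_def)
  finally have "a / (1 - P * a) * W - a * (P * a) / (1 - P * a) * W = a * W" .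
  then show ?case unfolding append_Nil id_word tr_word merged_word .
next
  case (Cons c u)
  let ?x' = "x(l := x l * x (Suc l))"
  let ?s = "u @ l # Suc l # v" and ?s' = "u @ l # v"
  have c: "c \<noteq> l" "c \<noteq> Suc l" using Cons.prems by auto
  have IH: "wcoeff id x (P * x c) ?s - wcoeff (tr l) x (P * x c) ?s = wcoeff id ?x' (P * x c) ?s'"
    using Cons.prems by (intro Cons.IH) (auto simp: mult.assoc)
  have hd_s: "hd ?s = hd ?s'" "hd ?s \<noteq> Suc l" using Cons.prems by (cases u; auto)+
  have cmp: "tr l (hd ?s) < tr l c \<longleftrightarrow> hd ?s' < c"
    using c hd_s by (auto simp: transpose_def)
  define K where "K = x c * (if hd ?s' < c then P * x c else 1) / (1 - P * x c)"
  have id_word: "wcoeff id x P (c # ?s) = K * wcoeff id x (P * x c) ?s"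
    by (simp add: K_def hd_s)
  have tr_word: "wcoeff (tr l) x P (c # ?s) = K * wcoeff (tr l) x (P * x c) ?s"
    by (simp add: K_def cmp)
  have merged_word: "wcoeff id ?x' P (c # ?s') = K * wcoeff id ?x' (P * x c) ?s'"
    using c by (simp add: K_def)
  show ?case
    unfolding append_Cons id_word tr_word merged_word IH[symmetric] right_diff_distrib ..
qed

(* The same identity for the block "l+1, l", obtained from the previous one by renaming the
  letters with (l l+1); the difference now has the opposite sign. *)
lemma wcoeff_swap_adjacent_reversed:
  assumes "l \<notin> set u" "Suc l \<notin> set u" "l \<notin> set v" "Suc l \<notin> set v"
    and "1 - P * prod_list (map x u) * x (Suc l) \<noteq> 0"
  shows "wcoeff id x P (u @ Suc l # l # v) - wcoeff (tr l) x P (u @ Suc l # l # v)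
       = - wcoeff id (x(l := x l * x (Suc l))) P (u @ l # v)"
proof -
  let ?w = "u @ l # Suc l # v"
  define y where "y = x \<circ> tr l"
  have "map (tr l) u = u" "map (tr l) v = v"
    using assms by (metis map_idI transpose_apply_other)+
  then have swapped: "map (tr l) ?w = u @ Suc l # l # v" by simp
  have y_u: "map y u = map x u" "y l = x (Suc l)"
    using \<open>map (tr l) u = u\<close> by (simp_all add: y_def flip: map_map)
  have "wcoeff id y P ?w - wcoeff (tr l) y P ?w = wcoeff id (y(l := y l * y (Suc l))) P (u @ l # v)"
    by (rule wcoeff_swap_adjacent) (use assms in \<open>simp_all add: y_u\<close>)
  also have "wcoeff id (y(l := y l * y (Suc l))) P (u @ l # v) = wcoeff id (x(l := x l * x (Suc l))) P (u @ l # v)"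
    by (rule wcoeff_cong) (use assms in \<open>auto simp: y_def transpose_def\<close>)
  finally have "wcoeff id y P ?w - wcoeff (tr l) y P ?w = wcoeff id (x(l := x l * x (Suc l))) P (u @ l # v)" .
  moreover have "wcoeff id x P (u @ Suc l # l # v) = wcoeff (tr l) y P ?w"
    unfolding swapped[symmetric] wcoeff_map y_def by simp
  moreover have "wcoeff (tr l) x P (u @ Suc l # l # v) = wcoeff id y P ?w"
    unfolding swapped[symmetric] wcoeff_map y_def by simp
  ultimately show ?thesis by (metis minus_diff_eq)
qed

definition arrangements :: "nat set \<Rightarrow> nat list set" where
  "arrangements A = {s. distinct s \<and> set s = A}"

lemma finite_arrangements: "finite A \<Longrightarrow> finite (arrangements A)"
proof -
  assume "finite A"
  have "arrangements A \<subseteq> {s. set s \<subseteq> A \<and> length s \<le> card A}"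
    unfolding arrangements_def using distinct_card by fastforce
  then show ?thesis using finite_lists_length_le[OF \<open>finite A\<close>] finite_subset by blast
qed

lemma arrangement_split:
  assumes "s \<in> arrangements A" "a \<in> A"
  obtains u v where "s = u @ a # v" "distinct (u @ v)" "a \<notin> set u" "a \<notin> set v"
    "set u \<union> set v = A - {a}"
proof -
  have s: "distinct s" "set s = A" using assms(1) by (simp_all add: arrangements_def)
  then obtain u v where "s = u @ a # v" using assms(2) by (meson split_list)
  with s that show ?thesis by auto
qed

fun replace_letter :: "nat \<Rightarrow> nat list \<Rightarrow> nat list \<Rightarrow> nat list" where
  "replace_letter a z [] = []"
| "replace_letter a z (c # s) = (if c = a then z @ s else c # replace_letter a z s)"

lemma replace_letter_split: "a \<notin> set u \<Longrightarrow> replace_letter a z (u @ a # v) = u @ z @ v"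
  by (induction u) auto

lemma sum_adjacent_pair:
  assumes "a \<in> A" "b \<in> A" "a \<noteq> b" "z = [a, b] \<or> z = [b, a]"
  shows "(\<Sum>s\<in>{s \<in> arrangements A. \<exists>u v. s = u @ z @ v}. f s)
       = (\<Sum>s\<in>arrangements (A - {b}). f (replace_letter a z s))"
proof (rule sum.reindex_bij_witness[symmetric, where i = "remove1 b" and j = "replace_letter a z"])
  have z: "distinct z" "set z = {a, b}" "remove1 b z = [a]" using assms(3,4) by auto
  fix s assume "s \<in> arrangements (A - {b})"
  moreover have "a \<in> A - {b}" using assms(1,3) by simp
  ultimately obtain u v where uv: "s = u @ a # v" "distinct (u @ v)" "a \<notin> set u" "a \<notin> set v"
      "set u \<union> set v = A - {b} - {a}"
    by (rule arrangement_split)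
  then have b: "b \<notin> set u" "b \<notin> set v" by auto
  show "remove1 b (replace_letter a z s) = s"
    using uv b z by (simp add: replace_letter_split remove1_append)
  show "replace_letter a z s \<in> {s \<in> arrangements A. \<exists>u v. s = u @ z @ v}"
    using uv b z assms(1,2) by (auto simp: replace_letter_split arrangements_def)
next
  have z: "distinct z" "set z = {a, b}" "remove1 b z = [a]" using assms(3,4) by auto
  fix t assume "t \<in> {s \<in> arrangements A. \<exists>u v. s = u @ z @ v}"
  then obtain u v where uv: "t = u @ z @ v" "distinct t" "set t = A"
    by (auto simp: arrangements_def)
  then have ab: "a \<notin> set u" "a \<notin> set v" "b \<notin> set u" "b \<notin> set v" using z by auto
  then have r: "remove1 b t = u @ a # v" using uv(1) z by (simp add: remove1_append)
  show "replace_letter a z (remove1 b t) = t"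
    unfolding r by (simp add: replace_letter_split ab uv(1))
  show "remove1 b t \<in> arrangements (A - {b})"
    using uv ab z assms(3) by (auto simp: r arrangements_def)
qed simp

lemma distinct_not_both_orders:
  assumes "distinct s" "s = u @ a # b # v" "s = u' @ b # a # v'"
  shows False
proof -
  have "s ! length u = a" "s ! Suc (length u) = b"
    using assms(2) by (simp_all add: nth_append)
  moreover have "s ! length u' = b" "s ! Suc (length u') = a"
    using assms(3) by (simp_all add: nth_append)
  moreover have "Suc (length u) < length s" using assms(2) by simp
  moreover have "Suc (length u') < length s" using assms(3) by simp
  ultimately have "length u = Suc (length u')" "Suc (length u) = length u'"
    using nth_eq_iff_index_eq[OF assms(1)] by (metis Suc_lessD)+
  then show False by simp
qed

lemma map_in_arrangements:
  assumes "bij_betw e B A" "s \<in> arrangements B"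
  shows "map e s \<in> arrangements A"
  using assms by (auto simp: arrangements_def bij_betw_def distinct_map)

lemma sum_arrangements_reindex:
  assumes "bij_betw e B A"
  shows "(\<Sum>s\<in>arrangements A. g s) = (\<Sum>s\<in>arrangements B. g (map e s))"
proof (rule sum.reindex_bij_witness[symmetric, where i = "map (inv_into B e)" and j = "map e"])
  fix s assume s: "s \<in> arrangements B"
  show "map (inv_into B e) (map e s) = s"
    using s assms by (auto simp: arrangements_def bij_betw_def intro: map_idI)
  show "map e s \<in> arrangements A" using assms s by (rule map_in_arrangements)
next
  have inv: "bij_betw (inv_into B e) A B" using assms by (rule bij_betw_inv_into)
  fix t assume t: "t \<in> arrangements A"
  show "map e (map (inv_into B e) t) = t"
    using t assms by (auto simp: arrangements_def bij_betw_def f_inv_into_f intro: map_idI)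
  show "map (inv_into B e) t \<in> arrangements B" using inv t by (rule map_in_arrangements)
qed simp

(* The genericity hypothesis on the X's keeps every running product away from 1, so that all
  denominators occurring in the coefficients are nonzero. *)
lemma prefix_product_ne_one:
  fixes x :: "nat \<Rightarrow> 'a::comm_ring_1"
  assumes nz: "\<forall>S. S \<subseteq> A \<and> S \<noteq> {} \<longrightarrow> (\<Prod>k\<in>S. x k) \<noteq> 1"
    and "distinct u" "c \<notin> set u" "set u \<subseteq> A" "c \<in> A"
  shows "1 - prod_list (map x u) * x c \<noteq> 0"
proof -
  have "(\<Prod>k\<in>insert c (set u). x k) = prod_list (map x u) * x c"
    using assms(2,3) by (simp add: prod.distinct_set_conv_list mult.commute)
  moreover have "(\<Prod>k\<in>insert c (set u). x k) \<noteq> 1"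
    using nz[rule_format, of "insert c (set u)"] assms(4,5) by simp
  ultimately show ?thesis by simp
qed

lemma merged_pair_contribution:
  fixes su :: "complex \<Rightarrow> 'u::ring_1 \<Rightarrow> 'u" and x :: "nat \<Rightarrow> complex" and y :: "nat \<Rightarrow> 'u"
  assumes "vector_space su" "s \<in> arrangements (A - {Suc l})" "l \<in> A" "Suc l \<in> A"
    and nz: "\<forall>S. S \<subseteq> A \<and> S \<noteq> {} \<longrightarrow> (\<Prod>k\<in>S. x k) \<noteq> 1"
  defines "f \<equiv> \<lambda>t. su (wcoeff id x 1 t - wcoeff (tr l) x 1 t) (prod_list (map y t))"
  shows "f (replace_letter l [l, Suc l] s) + f (replace_letter l [Suc l, l] s)
       = su (wcoeff id (x(l := x l * x (Suc l))) 1 s)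
            (prod_list (map (y(l := y l * y (Suc l) - y (Suc l) * y l)) s))"
proof -
  interpret vector_space su by (rule assms(1))
  let ?x' = "x(l := x l * x (Suc l))" and ?y' = "y(l := y l * y (Suc l) - y (Suc l) * y l)"
  have "l \<in> A - {Suc l}" using assms(3) by simp
  with assms(2) obtain u v where uv: "s = u @ l # v" "distinct (u @ v)" "l \<notin> set u" "l \<notin> set v"
      "set u \<union> set v = A - {Suc l} - {l}"
    by (rule arrangement_split)
  then have Sl: "Suc l \<notin> set u" "Suc l \<notin> set v" by auto
  have prefix_l: "1 - prod_list (map x u) * x l \<noteq> 0"
    by (rule prefix_product_ne_one[OF nz]) (use uv assms(3) in auto)
  have prefix_Suc_l: "1 - prod_list (map x u) * x (Suc l) \<noteq> 0"
    by (rule prefix_product_ne_one[OF nz]) (use uv Sl assms(4) in auto)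
  have coeff_ab: "wcoeff id x 1 (u @ l # Suc l # v) - wcoeff (tr l) x 1 (u @ l # Suc l # v)
      = wcoeff id ?x' 1 s"
    unfolding uv(1) by (rule wcoeff_swap_adjacent) (use uv Sl prefix_l in simp_all)
  have coeff_ba: "wcoeff id x 1 (u @ Suc l # l # v) - wcoeff (tr l) x 1 (u @ Suc l # l # v)
      = - wcoeff id ?x' 1 s"
    unfolding uv(1) by (rule wcoeff_swap_adjacent_reversed) (use uv Sl prefix_Suc_l in simp_all)
  have y'_uv: "map ?y' u = map y u" "map ?y' v = map y v" using uv by auto
  have commutator: "prod_list (map y (u @ l # Suc l # v)) - prod_list (map y (u @ Suc l # l # v))
      = prod_list (map ?y' s)"
    by (simp add: uv(1) y'_uv algebra_simps)
  have replaced: "replace_letter l z s = u @ z @ v" for z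
    using uv(1,3) by (simp add: replace_letter_split)
  have combine: "su c a + su (- c) b = su c (a - b)" for c a b
    by (simp add: scale_right_diff_distrib)
  show ?thesis
    unfolding f_def replaced append_Cons append_Nil coeff_ab coeff_ba combine commutator ..
qed

(* Arrangements where l and l+1 are not adjacent cancel;
  the others are handled by merged_pair_contribution. *)
lemma arrangement_sum_swap:
  fixes su :: "complex \<Rightarrow> 'u::ring_1 \<Rightarrow> 'u" and x :: "nat \<Rightarrow> complex" and y :: "nat \<Rightarrow> 'u"
  assumes "vector_space su" "finite A" "l \<in> A" "Suc l \<in> A"
    and nz: "\<forall>S. S \<subseteq> A \<and> S \<noteq> {} \<longrightarrow> (\<Prod>k\<in>S. x k) \<noteq> 1"
  shows "(\<Sum>s\<in>arrangements A. su (wcoeff id x 1 s) (prod_list (map y s)))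
       - (\<Sum>s\<in>arrangements A. su (wcoeff (tr l) x 1 s) (prod_list (map y s)))
       = (\<Sum>s\<in>arrangements (A - {Suc l}). su (wcoeff id (x(l := x l * x (Suc l))) 1 s)
            (prod_list (map (y(l := y l * y (Suc l) - y (Suc l) * y l)) s)))"
proof -
  interpret vector_space su by (rule assms(1))
  define f where "f t = su (wcoeff id x 1 t - wcoeff (tr l) x 1 t) (prod_list (map y t))" for t
  define adjacent where "adjacent z = {s \<in> arrangements A. \<exists>u v. s = u @ z @ v}" for z
  have fin: "finite (arrangements A)" using assms(2) by (rule finite_arrangements)
  have "(\<Sum>s\<in>arrangements A. su (wcoeff id x 1 s) (prod_list (map y s)))
      - (\<Sum>s\<in>arrangements A. su (wcoeff (tr l) x 1 s) (prod_list (map y s)))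
      = sum f (arrangements A)"
    by (simp add: f_def sum_subtractf scale_left_diff_distrib)
  also have "\<dots> = sum f (adjacent [l, Suc l] \<union> adjacent [Suc l, l])"
    by (rule sum.mono_neutral_right)
       (auto simp: fin adjacent_def f_def wcoeff_swap_nonadjacent[symmetric])
  also have "\<dots> = sum f (adjacent [l, Suc l]) + sum f (adjacent [Suc l, l])"
    by (rule sum.union_disjoint)
       (auto simp: adjacent_def arrangements_def intro: finite_subset[OF _ fin]
             dest: distinct_not_both_orders)
  also have "\<dots> = (\<Sum>s\<in>arrangements (A - {Suc l}).
        f (replace_letter l [l, Suc l] s) + f (replace_letter l [Suc l, l] s))"
    unfolding sum.distrib adjacent_def
    by (intro arg_cong2[where f = "(+)"] sum_adjacent_pair) (use assms(3,4) in auto)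
  also have "\<dots> = (\<Sum>s\<in>arrangements (A - {Suc l}). su (wcoeff id (x(l := x l * x (Suc l))) 1 s)
            (prod_list (map (y(l := y l * y (Suc l) - y (Suc l) * y l)) s)))"
    using merged_pair_contribution[OF assms(1) _ assms(3,4) nz] by (simp add: f_def)
  finally show ?thesis .
qed

lemma wcoeff_closed_form:
  "wcoeff \<rho> x P s = (\<Prod>k<length s. x (s ! k) *
      (if Suc k < length s \<and> \<rho> (s ! Suc k) < \<rho> (s ! k) then P * (\<Prod>i\<le>k. x (s ! i)) else 1)
      / (1 - P * (\<Prod>i\<le>k. x (s ! i))))"
proof (induction s arbitrary: P)
  case Nil
  then show ?case by simp
next
  case (Cons c s)
  define f where "f k = x ((c # s) ! k) *
      (if Suc k < length (c # s) \<and> \<rho> ((c # s) ! Suc k) < \<rho> ((c # s) ! k)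
       then P * (\<Prod>i\<le>k. x ((c # s) ! i)) else 1)
      / (1 - P * (\<Prod>i\<le>k. x ((c # s) ! i)))" for k
  have f0: "f 0 = x c * (if s \<noteq> [] \<and> \<rho> (hd s) < \<rho> c then P * x c else 1) / (1 - P * x c)"
    unfolding f_def by (cases s) auto
  have fSuc: "f (Suc k) = x (s ! k) *
      (if Suc k < length s \<and> \<rho> (s ! Suc k) < \<rho> (s ! k) then (P * x c) * (\<Prod>i\<le>k. x (s ! i)) else 1)
      / (1 - (P * x c) * (\<Prod>i\<le>k. x (s ! i)))" for k
    unfolding f_def prod.atMost_Suc_shift by (simp add: mult.assoc)
  have "(\<Prod>k<length (c # s). f k) = f 0 * (\<Prod>k<length s. f (Suc k))"
    unfolding length_Cons prod.lessThan_Suc_shift ..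
  also have "\<dots> = wcoeff \<rho> x P (c # s)"
    unfolding f0 fSuc wcoeff.simps(2) Cons.IH[of "P * x c"] ..
  finally show ?case unfolding f_def by simp
qed

(* x (sigma k) ^ a_k collects one factor x (sigma k) for every descent at a position j >= k;
  regrouping by descents gives one prefix product per descent. *)
lemma descent_power_product:
  fixes x :: "nat \<Rightarrow> 'a::comm_monoid_mult" and m :: nat and \<sigma> :: "nat \<Rightarrow> nat"
  defines "J \<equiv> {j. Suc j < m \<and> \<sigma> (Suc j) < \<sigma> j}"
  shows "(\<Prod>k<m. x (\<sigma> k) ^ descents_from m \<sigma> k) = (\<Prod>k<m. if k \<in> J then (\<Prod>i\<le>k. x (\<sigma> i)) else 1)"
proof -
  have finJ: "finite J" "J \<subseteq> {..<m}" unfolding J_def by (auto intro: finite_subset[of _ "{..<m}"])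
  have d: "descents_from m \<sigma> k = card {j \<in> J. k \<le> j}" for k
    unfolding descents_from_def J_def by (rule arg_cong[where f = card]) auto
  have "(\<Prod>k<m. x (\<sigma> k) ^ descents_from m \<sigma> k) = (\<Prod>k<m. \<Prod>j\<in>{j \<in> J. k \<le> j}. x (\<sigma> k))"
    unfolding d by simp
  also have "\<dots> = (\<Prod>j\<in>J. \<Prod>k\<in>{k \<in> {..<m}. k \<le> j}. x (\<sigma> k))"
    by (rule prod.swap_restrict) (use finJ in auto)
  also have "\<dots> = (\<Prod>j\<in>J. \<Prod>k\<le>j. x (\<sigma> k))"
  proof (rule prod.cong[OF refl])
    fix j assume "j \<in> J"
    then have "{k \<in> {..<m}. k \<le> j} = {..j}" using finJ by auto
    then show "(\<Prod>k\<in>{k \<in> {..<m}. k \<le> j}. x (\<sigma> k)) = (\<Prod>k\<le>j. x (\<sigma> k))" by simp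
  qed
  also have "\<dots> = (\<Prod>j\<in>{..<m} \<inter> J. \<Prod>k\<le>j. x (\<sigma> k))"
    using finJ by (simp add: Int_absorb1)
  also have "\<dots> = (\<Prod>k<m. if k \<in> J then (\<Prod>i\<le>k. x (\<sigma> i)) else 1)"
    by (rule prod.inter_restrict) simp
  finally show ?thesis .
qed

lemma AX_sigma_coefficient:
  fixes x :: "nat \<Rightarrow> 'a::field"
  shows "(\<Prod>k<m. x (\<sigma> k) ^ (descents_from m \<sigma> k + 1) / (1 - (\<Prod>i\<le>k. x (\<sigma> i))))
       = wcoeff id x 1 (map \<sigma> [0..<m])"
proof -
  define J where "J = {j. Suc j < m \<and> \<sigma> (Suc j) < \<sigma> j}"
  have "wcoeff id x 1 (map \<sigma> [0..<m])
      = (\<Prod>k<m. x (\<sigma> k) * (if k \<in> J then (\<Prod>i\<le>k. x (\<sigma> i)) else 1) / (1 - (\<Prod>i\<le>k. x (\<sigma> i))))"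
    unfolding wcoeff_closed_form by (auto simp: J_def intro!: prod.cong)
  also have "\<dots> = (\<Prod>k<m. x (\<sigma> k) / (1 - (\<Prod>i\<le>k. x (\<sigma> i))))
                 * (\<Prod>k<m. if k \<in> J then (\<Prod>i\<le>k. x (\<sigma> i)) else 1)"
    by (simp add: prod.distrib[symmetric])
  also have "\<dots> = (\<Prod>k<m. x (\<sigma> k) / (1 - (\<Prod>i\<le>k. x (\<sigma> i)))) * (\<Prod>k<m. x (\<sigma> k) ^ descents_from m \<sigma> k)"
    unfolding descent_power_product J_def ..
  also have "\<dots> = (\<Prod>k<m. x (\<sigma> k) ^ (descents_from m \<sigma> k + 1) / (1 - (\<Prod>i\<le>k. x (\<sigma> i))))"
    by (simp add: prod.distrib[symmetric])
  finally show ?thesis ..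
qed

lemma arrangement_as_permutation:
  assumes "s \<in> arrangements {..<m}"
  shows "(\<lambda>k. if k < m then s ! k else k) permutes {..<m}"
proof (rule bij_imp_permutes)
  have s: "distinct s" "set s = {..<m}" "length s = m"
    using assms distinct_card[of s] by (auto simp: arrangements_def)
  show "bij_betw (\<lambda>k. if k < m then s ! k else k) {..<m} {..<m}"
  proof (rule bij_betw_imageI)
    show "inj_on (\<lambda>k. if k < m then s ! k else k) {..<m}"
      using nth_eq_iff_index_eq[OF s(1)] s(3) by (auto simp: inj_on_def)
    have "(\<lambda>k. if k < m then s ! k else k) ` {..<m} = (\<lambda>k. s ! k) ` {..<m}" by auto
    also have "\<dots> = set s" using s(3) by (auto simp: set_conv_nth)
    finally show "(\<lambda>k. if k < m then s ! k else k) ` {..<m} = {..<m}" using s(2) by simp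
  qed
qed simp

lemma permutations_arrangements_bij:
  "bij_betw (\<lambda>\<sigma>. map \<sigma> [0..<m]) {\<sigma>. \<sigma> permutes {..<m}} (arrangements {..<m})"
proof (rule bij_betw_byWitness[where f' = "\<lambda>s k. if k < m then s ! k else k"])
  show "\<forall>\<sigma>\<in>{\<sigma>. \<sigma> permutes {..<m}}. (\<lambda>k. if k < m then map \<sigma> [0..<m] ! k else k) = \<sigma>"
    by (auto simp: fun_eq_iff permutes_not_in)
  show "(\<lambda>\<sigma>. map \<sigma> [0..<m]) ` {\<sigma>. \<sigma> permutes {..<m}} \<subseteq> arrangements {..<m}"
    by (auto simp: arrangements_def distinct_map permutes_inj_on permutes_image atLeast0LessThan)
  have "length s = m" if "s \<in> arrangements {..<m}" for s
    using that distinct_card[of s] by (auto simp: arrangements_def)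
  then show "\<forall>s\<in>arrangements {..<m}. map (\<lambda>k. if k < m then s ! k else k) [0..<m] = s"
    by (auto intro: nth_equalityI)
  show "(\<lambda>s k. if k < m then s ! k else k) ` arrangements {..<m} \<subseteq> {\<sigma>. \<sigma> permutes {..<m}}"
    using arrangement_as_permutation by blast
qed

lemma AX_sigma_as_wcoeff:
  fixes su :: "complex \<Rightarrow> 'u::ring_1 \<Rightarrow> 'u" and \<iota> :: "'g \<Rightarrow> 'u"
  assumes "\<sigma> permutes {..<m}" "length ws = m"
    and hx: "\<forall>k<m. Xw (fst (ws ! k)) lam = xf k" and hy: "\<forall>k<m. \<iota> (snd (ws ! k)) = yf k"
  shows "AX_sigma su \<iota> lam ws \<sigma> = su (wcoeff id xf 1 (map \<sigma> [0..<m])) (prod_list (map yf (map \<sigma> [0..<m])))"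
proof -
  have \<sigma>_range: "\<sigma> k < m" if "k < m" for k using permutes_in_image[OF assms(1)] that by auto
  have coeff: "wcoeff id (\<lambda>k. Xw (fst (ws ! k)) lam) 1 (map \<sigma> [0..<m]) = wcoeff id xf 1 (map \<sigma> [0..<m])"
    by (rule wcoeff_cong) (use \<sigma>_range hx in auto)
  have word: "map (\<lambda>k. \<iota> (snd (ws ! \<sigma> k))) [0..<m] = map yf (map \<sigma> [0..<m])"
    using \<sigma>_range hy by auto
  show ?thesis
    unfolding AX_sigma_def Let_def assms(2) AX_sigma_coefficient coeff word ..
qed

lemma AX_as_arrangement_sum:
  fixes su :: "complex \<Rightarrow> 'u::ring_1 \<Rightarrow> 'u" and \<iota> :: "'g \<Rightarrow> 'u"
  assumes "length ws = m" and "\<forall>k<m. Xw (fst (ws ! k)) lam = xf k"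
    and "\<forall>k<m. \<iota> (snd (ws ! k)) = yf k"
  shows "AX su \<iota> lam ws = (\<Sum>s\<in>arrangements {..<m}. su (wcoeff id xf 1 s) (prod_list (map yf s)))"
proof -
  have "AX su \<iota> lam ws = (\<Sum>\<sigma>\<in>{\<sigma>. \<sigma> permutes {..<m}}.
          su (wcoeff id xf 1 (map \<sigma> [0..<m])) (prod_list (map yf (map \<sigma> [0..<m]))))"
    unfolding AX_def assms(1) using AX_sigma_as_wcoeff[OF _ assms] by (intro sum.cong) auto
  also have "\<dots> = (\<Sum>s\<in>arrangements {..<m}. su (wcoeff id xf 1 s) (prod_list (map yf s)))"
    using permutations_arrangements_bij by (rule sum.reindex_bij_betw)
  finally show ?thesis .
qed

lemma AX_transposed_word:
  fixes su :: "complex \<Rightarrow> 'u::ring_1 \<Rightarrow> 'u" and \<iota> :: "'g \<Rightarrow> 'u"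
  assumes "Suc l < m"
  shows "AX su \<iota> lam (map (\<lambda>k. w (tr l k)) [0..<m])
       = (\<Sum>s\<in>arrangements {..<m}. su (wcoeff (tr l) (\<lambda>k. Xw (fst (w k)) lam) 1 s)
            (prod_list (map (\<lambda>k. \<iota> (snd (w k))) s)))"
proof -
  let ?x = "\<lambda>k. Xw (fst (w k)) lam" and ?y = "\<lambda>k. \<iota> (snd (w k))"
  have "AX su \<iota> lam (map (\<lambda>k. w (tr l k)) [0..<m])
      = (\<Sum>s\<in>arrangements {..<m}. su (wcoeff id (?x \<circ> tr l) 1 s) (prod_list (map (?y \<circ> tr l) s)))"
    by (rule AX_as_arrangement_sum) auto
  also have "\<dots> = (\<Sum>s\<in>arrangements {..<m}. su (wcoeff id (?x \<circ> tr l) 1 (map (tr l) s))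
                      (prod_list (map (?y \<circ> tr l) (map (tr l) s))))"
    using assms by (intro sum_arrangements_reindex) simp
  also have "\<dots> = (\<Sum>s\<in>arrangements {..<m}. su (wcoeff (tr l) ?x 1 s) (prod_list (map ?y s)))"
    by (simp add: wcoeff_map comp_assoc)
  finally show ?thesis .
qed

lemma skip_letter_bij:
  assumes "Suc l < m"
  shows "bij_betw (\<lambda>k. if k \<le> l then k else Suc k) {..<m - 1} ({..<m} - {Suc l})"
  by (rule bij_betw_byWitness[where f' = "\<lambda>k. if k \<le> l then k else k - 1"]) (use assms in auto)

lemma AX_contracted_word:
  fixes su :: "complex \<Rightarrow> 'u::ring_1 \<Rightarrow> 'u" and \<iota> :: "'g \<Rightarrow> 'u"
  assumes "Suc l < m"
  shows "AX su \<iota> lam (map w [0..<l] @ [(\<gamma>, G)] @ map w [Suc (Suc l)..<m])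
       = (\<Sum>s\<in>arrangements ({..<m} - {Suc l}).
            su (wcoeff id ((\<lambda>k. Xw (fst (w k)) lam)(l := Xw \<gamma> lam)) 1 s)
               (prod_list (map ((\<lambda>k. \<iota> (snd (w k)))(l := \<iota> G)) s)))"
proof -
  let ?x = "(\<lambda>k. Xw (fst (w k)) lam)(l := Xw \<gamma> lam)" and ?y = "(\<lambda>k. \<iota> (snd (w k)))(l := \<iota> G)"
  let ?ws = "map w [0..<l] @ [(\<gamma>, G)] @ map w [Suc (Suc l)..<m]"
  define e where "e k = (if k \<le> l then k else Suc k)" for k
  have e_mono: "e d < e c \<longleftrightarrow> d < c" for c d by (auto simp: e_def)
  have e_bij: "bij_betw e {..<m - 1} ({..<m} - {Suc l})"
    unfolding e_def by (rule skip_letter_bij[OF assms])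
  have ws_nth: "?ws ! k = (if k = l then (\<gamma>, G) else w (e k))" if "k < m - 1" for k
    using that assms by (auto simp: nth_append e_def)
  have "AX su \<iota> lam ?ws
      = (\<Sum>s\<in>arrangements {..<m - 1}. su (wcoeff id (?x \<circ> e) 1 s) (prod_list (map (?y \<circ> e) s)))"
    by (rule AX_as_arrangement_sum) (use assms in \<open>auto simp: ws_nth e_def simp del: append_Cons append_Nil\<close>)
  also have "\<dots> = (\<Sum>s\<in>arrangements {..<m - 1}. su (wcoeff id ?x 1 (map e s)) (prod_list (map ?y (map e s))))"
  proof -
    have "wcoeff id (?x \<circ> e) 1 s = wcoeff e (?x \<circ> e) 1 s" for s
      by (rule wcoeff_cong) (auto simp: e_mono)
    then show ?thesis by (simp add: wcoeff_map)
  qed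
  also have "\<dots> = (\<Sum>s\<in>arrangements ({..<m} - {Suc l}). su (wcoeff id ?x 1 s) (prod_list (map ?y s)))"
    using e_bij by (rule sum_arrangements_reindex[symmetric])
  finally show ?thesis .
qed

lemma Xw_sum: "finite S \<Longrightarrow> Xw (\<lambda>t. \<Sum>k\<in>S. \<beta> k t) lam = (\<Prod>k\<in>S. Xw (\<beta> k) lam)"
  unfolding Xw_def by (simp add: sum_distrib_left exp_sum)

lemma Xw_add: "Xw (\<lambda>t. \<beta>1 t + \<beta>2 t) lam = Xw \<beta>1 lam * Xw \<beta>2 lam"
  unfolding Xw_def by (simp add: distrib_left exp_add[symmetric])

lemma generic_weights:
  assumes "\<forall>S. S \<subseteq> A \<and> S \<noteq> {} \<longrightarrow> Xw (\<lambda>t. \<Sum>k\<in>S. \<beta> k t) lam \<noteq> 1" "finite A"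
  shows "\<forall>S. S \<subseteq> A \<and> S \<noteq> {} \<longrightarrow> (\<Prod>k\<in>S. Xw (\<beta> k) lam) \<noteq> 1"
  using assms by (metis Xw_sum finite_subset)

(* iota turns the bracket of two negative root vectors into their commutator in U, since root
  vectors of negative roots lie in n_-, where iota is a Lie homomorphism. *)
lemma bracket_of_root_vectors:
  assumes "vector_space sc" "lie_hom_into sc br (n_minus sc br h al r) su \<iota>"
    and "pos_root sc br h al r \<beta>" "E \<in> root_space sc br h (\<lambda>t. - \<beta> t)"
    and "pos_root sc br h al r \<gamma>" "F \<in> root_space sc br h (\<lambda>t. - \<gamma> t)"
  shows "\<iota> (br E F) = \<iota> E * \<iota> F - \<iota> F * \<iota> E"
proof -
  interpret vector_space sc by (rule assms(1))
  have "E \<in> n_minus sc br h al r" "F \<in> n_minus sc br h al r"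
    unfolding n_minus_def using assms(3-6) by (blast intro: span_base)+
  then show ?thesis using assms(2) by (simp add: lie_hom_into_def)
qed

theorem lemma4p5:
  fixes sc :: "complex \<Rightarrow> 'g::ab_group_add \<Rightarrow> 'g" and br :: "'g \<Rightarrow> 'g \<Rightarrow> 'g"
    and h :: "'g set" and al :: "nat \<Rightarrow> 'g \<Rightarrow> complex" and r :: nat
    and su :: "complex \<Rightarrow> 'u::ring_1 \<Rightarrow> 'u" and \<iota> :: "'g \<Rightarrow> 'u"
    and m l :: nat and \<beta> :: "nat \<Rightarrow> 'g \<Rightarrow> complex" and F :: "nat \<Rightarrow> 'g" and lam :: 'g
  assumes "simple_lie_algebra sc br"
    and "cartan_subalgebra sc br h"
    and "simple_roots sc br h al r"
    and "complex_assoc_algebra su"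
    and "lie_hom_into sc br (n_minus sc br h al r) su \<iota>"
    and "m \<ge> 2" and "Suc l < m"
    and "\<forall>k<m. pos_root sc br h al r (\<beta> k)"
    and "\<forall>k<m. F k \<in> root_space sc br h (\<lambda>t. - \<beta> k t)"
    and "lam \<in> h"
    and "\<forall>S. S \<subseteq> {..<m} \<and> S \<noteq> {} \<longrightarrow> Xw (\<lambda>t. \<Sum>k\<in>S. \<beta> k t) lam \<noteq> 1"
  shows "AX su \<iota> lam (map (\<lambda>k. (\<beta> k, F k)) [0..<m])
         - AX su \<iota> lam (map (\<lambda>k. (\<beta> (Transposition.transpose l (Suc l) k), F (Transposition.transpose l (Suc l) k))) [0..<m])
         = AX su \<iota> lam (map (\<lambda>k. (\<beta> k, F k)) [0..<l]
              @ [(\<lambda>t. \<beta> l t + \<beta> (Suc l) t, br (F l) (F (Suc l)))]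
              @ map (\<lambda>k. (\<beta> k, F k)) [Suc (Suc l)..<m])"
proof -
  define x where "x k = Xw (\<beta> k) lam" for k
  define y where "y k = \<iota> (F k)" for k
  have su_vs: "vector_space su" using assms(4) by (simp add: complex_assoc_algebra_def)
  have sc_vs: "vector_space sc" using assms(1) by (simp add: simple_lie_algebra_def lie_algebra_def)
  have bracket: "\<iota> (br (F l) (F (Suc l))) = y l * y (Suc l) - y (Suc l) * y l"
    unfolding y_def using assms(7-9)
    by (intro bracket_of_root_vectors[OF sc_vs assms(5), where \<beta> = "\<beta> l" and \<gamma> = "\<beta> (Suc l)"]) auto
  have nz: "\<forall>S. S \<subseteq> {..<m} \<and> S \<noteq> {} \<longrightarrow> (\<Prod>k\<in>S. x k) \<noteq> 1"
    unfolding x_def using assms(11) by (intro generic_weights) auto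
  have word: "AX su \<iota> lam (map (\<lambda>k. (\<beta> k, F k)) [0..<m])
      = (\<Sum>s\<in>arrangements {..<m}. su (wcoeff id x 1 s) (prod_list (map y s)))"
    by (rule AX_as_arrangement_sum) (auto simp: x_def y_def)
  have transposed: "AX su \<iota> lam (map (\<lambda>k. (\<beta> (tr l k), F (tr l k))) [0..<m])
      = (\<Sum>s\<in>arrangements {..<m}. su (wcoeff (tr l) x 1 s) (prod_list (map y s)))"
    using AX_transposed_word[OF assms(7), of su \<iota> lam "\<lambda>k. (\<beta> k, F k)"]
    by (simp add: x_def[abs_def] y_def[abs_def])
  have contracted: "AX su \<iota> lam (map (\<lambda>k. (\<beta> k, F k)) [0..<l]
              @ [(\<lambda>t. \<beta> l t + \<beta> (Suc l) t, br (F l) (F (Suc l)))]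
              @ map (\<lambda>k. (\<beta> k, F k)) [Suc (Suc l)..<m])
      = (\<Sum>s\<in>arrangements ({..<m} - {Suc l}). su (wcoeff id (x(l := x l * x (Suc l))) 1 s)
            (prod_list (map (y(l := y l * y (Suc l) - y (Suc l) * y l)) s)))"
    using AX_contracted_word[OF assms(7), of su \<iota> lam "\<lambda>k. (\<beta> k, F k)"]
    by (simp add: x_def[abs_def] y_def[abs_def] bracket[unfolded y_def] Xw_add)
  show ?thesis
    unfolding word transposed contracted
    by (rule arrangement_sum_swap[OF su_vs _ _ _ nz]) (use assms(7) in auto)
qed

end
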